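(* Let $X$ be a Hausdorff first-countable topological space and let $f:X\to X$ be a closed mapping which is a weak topological contraction. Then $f$ has a unique fixed point.
   Context: A mapping is closed if it maps closed sets to closed sets (continuity is not assumed). A mapping $f:X\to X$ is a weak topological contraction if for every open cover $\mathcal{U}$ of $X$ and every pair of points $x,y\in X$ there exist $n\in\mathbb{N}_0=\{0,1,2,\dots\}$ and $U\in\mathcal{U}$ such that $f^n[\{x,y\}]\subseteq U$, where $f^n$ is the $n$-fold iterate of $f$ and $f^0$ is the identity. *)

theory Defs
  imports "HOL-Analysis.Analysis"
begin

definition closed_map_on_space :: "('a::topological_space \<Rightarrow> 'a) \<Rightarrow> bool" where
  "closed_map_on_space f \<longleftrightarrow> (\<forall>S. closed S \<longrightarrow> closed (f ` S))"

definition weak_topological_contraction :: "('a::topological_space \<Rightarrow> 'a) \<Rightarrow> bool" where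
  "weak_topological_contraction f \<longleftrightarrow>
     (\<forall>\<U>. (\<forall>U\<in>\<U>. open U) \<and> \<Union>\<U> = UNIV \<longrightarrow>
        (\<forall>x y. \<exists>n::nat. \<exists>U\<in>\<U>. (f ^^ n) ` {x, y} \<subseteq> U))"

end

theory Submission
  imports Defs
begin

text \<open>Uniqueness: two distinct fixed points are never moved into a common member of the open
  cover formed by disjoint neighbourhoods of them together with the complement of both.

  Existence: suppose f has no fixed point. Testing the contraction property on a periodic point
  p and f p against the cover by the complements of its finite orbit P and of each P - {w}
  shows that f has no periodic points either, so every orbit s n = f^n x is injective. Testing it on x and f x
  against the cover by all open sets containing no consecutive pair s n, s (n+1) yields a
  point z each of whose neighbourhoods contains such a pair; by first countability there are
  indices N k with both s (N k) and s (N k + 1) converging to z. As f is closed, the image of the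
  closed set {z} \<union> {s (N k) | k \<ge> K} contains z, so z = s (N k + 1) for infinitely many k.
  By injectivity N k is then frequently constant, hence s (N k) = z for that constant value,
  and z is a fixed point after all.\<close>

lemma closed_insert_limit_range:
  fixes a :: "nat \<Rightarrow> 'a::t2_space"
  assumes "a \<longlonglongrightarrow> z"
  shows "closed (insert z (range a))"
proof -
  have "compactin euclidean (insert z (range a))"
    using assms by (intro compactin_sequence_with_limit) auto
  then show ?thesis
    by (simp add: compact_imp_closed)
qed

lemma frequently_eq_limit:
  fixes a :: "'b \<Rightarrow> 'a::t1_space"
  assumes "(a \<longlongrightarrow> z) F" and "\<exists>\<^sub>F k in F. a k = w"
  shows "w = z"
  using assms(2) tendsto_imp_eventually_ne[OF assms(1), of w] by (auto simp: frequently_def)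

lemma first_countable_joint_limit_selection:
  fixes s t :: "nat \<Rightarrow> 'a::first_countable_topology"
  assumes "\<And>U. open U \<Longrightarrow> z \<in> U \<Longrightarrow> \<exists>n. s n \<in> U \<and> t n \<in> U"
  obtains N where "(\<lambda>k. s (N k)) \<longlonglongrightarrow> z" and "(\<lambda>k. t (N k)) \<longlonglongrightarrow> z"
proof -
  obtain A :: "nat \<Rightarrow> 'a set" where A: "\<And>k. open (A k)" "\<And>k. z \<in> A k"
    "\<And>F. \<forall>k. F k \<in> A k \<Longrightarrow> F \<longlonglongrightarrow> z"
    using first_countable_topology_class.countable_basis[of z] by blast
  have "\<forall>k. \<exists>n. s n \<in> A k \<and> t n \<in> A k"
    using assms A(1,2) by blast
  then obtain N where "\<And>k. s (N k) \<in> A k \<and> t (N k) \<in> A k"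
    by metis
  then have "(\<lambda>k. s (N k)) \<longlonglongrightarrow> z" "(\<lambda>k. t (N k)) \<longlonglongrightarrow> z"
    by (auto intro: A(3))
  then show ?thesis
    by (rule that)
qed

lemma closed_map_limit_in_image:
  fixes f :: "'a::t2_space \<Rightarrow> 'a"
  assumes "closed_map_on_space f" and "a \<longlonglongrightarrow> z" and "(\<lambda>k. f (a k)) \<longlonglongrightarrow> z"
  shows "z \<in> f ` insert z (range a)"
proof -
  have "closed (f ` insert z (range a))"
    using assms(1) closed_insert_limit_range[OF assms(2)] unfolding closed_map_on_space_def by blast
  then show ?thesis
    by (rule closed_sequentially[OF _ _ assms(3)]) auto
qed

lemma closed_map_limit_frequently_hit:
  fixes f :: "'a::t2_space \<Rightarrow> 'a"
  assumes "closed_map_on_space f" and "a \<longlonglongrightarrow> z" and "(\<lambda>k. f (a k)) \<longlonglongrightarrow> z"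
    and "f z \<noteq> z"
  shows "\<exists>\<^sub>F k in sequentially. f (a k) = z"
  unfolding frequently_sequentially
proof
  fix K
  have "z \<in> f ` insert z (range (\<lambda>k. a (k + K)))"
    using assms(1-3) by (intro closed_map_limit_in_image LIMSEQ_ignore_initial_segment)
  then obtain k where "f (a (k + K)) = z"
    using assms(4) by auto
  then show "\<exists>k\<ge>K. f (a k) = z"
    by (intro exI[of _ "k + K"]) simp
qed

lemma weak_topological_contractionE:
  assumes "weak_topological_contraction f"
    and "\<And>U. U \<in> \<U> \<Longrightarrow> open U" and "\<Union>\<U> = UNIV"
  obtains n U where "U \<in> \<U>" and "(f ^^ n) x \<in> U" and "(f ^^ n) y \<in> U"
proof -
  have "\<exists>n. \<exists>U\<in>\<U>. (f ^^ n) ` {x, y} \<subseteq> U"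
    using assms unfolding weak_topological_contraction_def by simp
  then show ?thesis
    using that by auto
qed

lemma weak_topological_contraction_fixed_point_unique:
  fixes f :: "'a::t2_space \<Rightarrow> 'a"
  assumes wtc: "weak_topological_contraction f" and "f x = x" and "f y = y"
  shows "x = y"
proof (rule ccontr)
  assume "x \<noteq> y"
  then obtain U V where UV: "open U" "open V" "x \<in> U" "y \<in> V" "U \<inter> V = {}"
    using hausdorff[of x y] by blast
  have "open (- {x, y})"
    by (simp add: finite_imp_closed open_Compl)
  with UV have "W \<in> {U, V, - {x, y}} \<Longrightarrow> open W" for W
    by blast
  moreover have "\<Union>{U, V, - {x, y}} = UNIV"
    using UV by blast
  ultimately obtain n W where "W \<in> {U, V, - {x, y}}" "(f ^^ n) x \<in> W" "(f ^^ n) y \<in> W"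
    by (rule weak_topological_contractionE[OF wtc, where x = x and y = y])
  moreover have "(f ^^ n) x = x" "(f ^^ n) y = y"
    using assms(2,3) by (induction n) simp_all
  ultimately show False
    using UV by auto
qed

lemma weak_topological_contraction_no_periodic_point:
  fixes f :: "'a::t1_space \<Rightarrow> 'a"
  assumes wtc: "weak_topological_contraction f" and no_fixed: "\<And>x. f x \<noteq> x" and "d > 0"
  shows "(f ^^ d) z \<noteq> z"
proof
  assume periodic: "(f ^^ d) z = z"
  define P where "P = (\<lambda>i. (f ^^ i) z) ` {..<d}"
  have orbit_in_P: "(f ^^ n) z \<in> P" for n
  proof -
    have "n mod d \<in> {..<d}"
      using \<open>d > 0\<close> by simp
    then show ?thesis
      unfolding P_def using funpow_mod_eq[OF periodic, of n] by (metis image_eqI)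
  qed
  define \<U> where "\<U> = insert (- P) ((\<lambda>w. - (P - {w})) ` P)"
  have "finite P"
    unfolding P_def by simp
  then have "closed P" "closed (P - {w})" for w
    by (simp_all add: finite_imp_closed)
  then have "open U" if "U \<in> \<U>" for U
    using that unfolding \<U>_def by (blast intro: open_Compl)
  moreover have "\<Union>\<U> = UNIV"
    unfolding \<U>_def by auto
  ultimately obtain n U where "U \<in> \<U>" "(f ^^ n) z \<in> U" "(f ^^ n) (f z) \<in> U"
    using wtc by (elim weak_topological_contractionE)
  moreover have "(f ^^ n) (f z) = f ((f ^^ n) z)"
    by (simp add: funpow_swap1)
  ultimately show False
    using orbit_in_P[of n] orbit_in_P[of "Suc n"] no_fixed[of "(f ^^ n) z"]
    unfolding \<U>_def by auto
qed

lemma weak_topological_contraction_inj_orbit: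
  fixes f :: "'a::t1_space \<Rightarrow> 'a"
  assumes "weak_topological_contraction f" and "\<And>x. f x \<noteq> x"
  shows "inj (\<lambda>n. (f ^^ n) x)"
proof (rule linorder_injI)
  fix m n :: nat
  assume "m < n"
  then have "(f ^^ n) x = (f ^^ (n - m + m)) x"
    by simp
  also have "\<dots> = (f ^^ (n - m)) ((f ^^ m) x)"
    by (simp only: funpow_add comp_apply)
  also have "\<dots> \<noteq> (f ^^ m) x"
    using \<open>m < n\<close> by (intro weak_topological_contraction_no_periodic_point[OF assms]) simp
  finally show "(f ^^ m) x \<noteq> (f ^^ n) x"
    by (rule not_sym)
qed

lemma weak_topological_contraction_orbit_cluster:
  assumes "weak_topological_contraction f"
  obtains z where "\<And>U. open U \<Longrightarrow> z \<in> U \<Longrightarrow> \<exists>n. (f ^^ n) x \<in> U \<and> (f ^^ Suc n) x \<in> U"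
proof -
  define \<U> where "\<U> = {U. open U \<and> (\<forall>n. (f ^^ n) x \<in> U \<longrightarrow> (f ^^ Suc n) x \<notin> U)}"
  have "\<Union>\<U> \<noteq> UNIV"
  proof
    assume cover: "\<Union>\<U> = UNIV"
    have "U \<in> \<U> \<Longrightarrow> open U" for U
      by (simp add: \<U>_def)
    then obtain n U where "U \<in> \<U>" "(f ^^ n) x \<in> U" "(f ^^ n) (f x) \<in> U"
      using cover by (rule weak_topological_contractionE[OF assms, where x = x and y = "f x"])
    then show False
      by (simp add: \<U>_def funpow_swap1)
  qed
  then obtain z where "z \<notin> \<Union>\<U>"
    by blast
  then show ?thesis
    by (intro that) (auto simp: \<U>_def)
qed

lemma closed_weak_topological_contraction_has_fixed_point:
  fixes f :: "'a::{t2_space, first_countable_topology} \<Rightarrow> 'a"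
  assumes closed: "closed_map_on_space f" and wtc: "weak_topological_contraction f"
  shows "\<exists>x. f x = x"
proof (rule ccontr)
  assume "\<nexists>x. f x = x"
  then have no_fixed: "\<And>x. f x \<noteq> x"
    by blast
  fix x :: 'a
  define s where "s n = (f ^^ n) x" for n
  have s_Suc: "s (Suc n) = f (s n)" for n
    by (simp add: s_def)
  have inj_s: "inj s"
    unfolding s_def using wtc no_fixed by (rule weak_topological_contraction_inj_orbit)
  obtain z where "\<And>U. open U \<Longrightarrow> z \<in> U \<Longrightarrow> \<exists>n. s n \<in> U \<and> s (Suc n) \<in> U"
    using weak_topological_contraction_orbit_cluster[OF wtc, of x] unfolding s_def by blast
  then obtain N where lim: "(\<lambda>k. s (N k)) \<longlonglongrightarrow> z" "(\<lambda>k. f (s (N k))) \<longlonglongrightarrow> z"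
    unfolding s_Suc by (rule first_countable_joint_limit_selection)
  have hit: "\<exists>\<^sub>F k in sequentially. f (s (N k)) = z"
    using closed lim no_fixed by (rule closed_map_limit_frequently_hit)
  then obtain k0 where k0: "f (s (N k0)) = z"
    by (auto dest: frequently_ex)
  have "N k = N k0" if "f (s (N k)) = z" for k
    using injD[OF inj_s, of "Suc (N k)" "Suc (N k0)"] that k0 by (simp add: s_Suc)
  with hit have "\<exists>\<^sub>F k in sequentially. s (N k) = s (N k0)"
    by (elim frequently_elim1) simp
  with lim(1) have "s (N k0) = z"
    by (rule frequently_eq_limit)
  then show False
    using k0 no_fixed by metis
qed

theorem theorem5:
  fixes f :: "'a::{t2_space, first_countable_topology} \<Rightarrow> 'a"
  assumes "closed_map_on_space f"
    and "weak_topological_contraction f"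
  shows "\<exists>!x. f x = x"
  using closed_weak_topological_contraction_has_fixed_point[OF assms]
    weak_topological_contraction_fixed_point_unique[OF assms(2)] by blast

end
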